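(* Let $p\ge 2$, $n\ge 1$, and let $X^{(1)},\dots,X^{(n)}\in\mathbb{R}^p$ be observations. Suppose $\{1,\dots,n\}=G\sqcup B$, where the observations $X^{(i)}$, $i\in G$, are i.i.d. $N(0,\Sigma^* )$ with $\Sigma^*=(\Theta^* )^{-1}$ for a symmetric positive definite $\Theta^*\in\mathbb{R}^{p\times p}$ having at most $k$ nonzero off-diagonal entries, and the observations $X^{(i)}$, $i\in B$, are arbitrary. Let $h:=|G|$, and let $R>0$ with $\|\Theta^*\|_1\le R$. Let $(\widetilde\Theta,\widetilde w)$ be any local optimum of the Trimmed Graphical Lasso problem (defined in the context) with parameters $h,R,\lambda$, and define $w^*\in\mathbb{R}^n$ by $w^*_i=\widetilde w_i$ for $i\in G$ and $w^*_i=0$ for $i\in B$. Put $\widetilde\Delta:=\widetilde\Theta-\Theta^*$ and $\widetilde\Gamma:=\widetilde w-w^*$. Assume: (i) (restricted strong convexity) there is $\kappa_l>0$ such that for every $\Delta\in\mathbb{R}^{p\times p}$ with $\|\Delta\|_F\le 1$ and $\Theta^*+\Delta$ positive definite, $$\langle\langle (\Theta^* )^{-1}-(\Theta^*+\Delta)^{-1},\Delta\rangle\rangle\ge\kappa_l\|\Delta\|_F^2;$$ (ii) (incoherence) there are nonnegative numbers $\tau_1(n,p),\tau_2(n,p)$ such that $$\Big|\Big\langle\Big\langle \frac1h\sum_{i=1}^n\widetilde\Gamma_i X^{(i)}(X^{(i)})^\top,\widetilde\Delta\Big\rangle\Big\rangle\Big|\le\tau_1(n,p)\|\widetilde\Delta\|_F+\tau_2(n,p)\|\widetilde\Delta\|_1;$$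 (iii) the regularization parameter satisfies $$4\max\Big\{\Big\|\frac1h\sum_{i=1}^n w^*_iX^{(i)}(X^{(i)})^\top-(\Theta^* )^{-1}\Big\|_\infty,\ \tau_2(n,p)\Big\}\le\lambda\le\frac{\kappa_l-\tau_1(n,p)}{3R}.$$ Then $$\|\widetilde\Theta-\Theta^*\|_F\le\frac{1}{\kappa_l}\Big(\frac{3\lambda\sqrt{k+p}}{2}+\tau_1(n,p)\Big)$$ and $$\|\widetilde\Theta-\Theta^*\|_{1,\mathrm{off}}\le\frac{2}{\lambda\kappa_l}\Big(3\lambda\sqrt{k+p}+\tau_1(n,p)\Big)^2.$$
   Context: Notation: for $U,V\in\mathbb{R}^{p\times p}$, $\langle\langle U,V\rangle\rangle=\mathrm{tr}(UV^\top)$; $\|U\|_1=\sum_{i,j}|U_{ij}|$ and $\|U\|_\infty=\max_{i,j}|U_{ij}|$ (element-wise norms, diagonal included); $\|U\|_{1,\mathrm{off}}=\sum_{i\ne j}|U_{ij}|$; $\|U\|_F$ is the Frobenius norm. Trimmed Graphical Lasso problem with parameters $h\in(0,n]$, $R>0$, $\lambda>0$: $$\min_{\Theta,w}\ \Big\langle\Big\langle\Theta,\frac1h\sum_{i=1}^n w_iX^{(i)}(X^{(i)})^\top\Big\rangle\Big\rangle-\log\det\Theta+\lambda\|\Theta\|_{1,\mathrm{off}}$$ subject to $\Theta$ symmetric positive definite, $w\in[0,1]^n$, $\mathbf 1^\top w=h$, $\|\Theta\|_1\le R$. A local optimum is a feasible pair $(\widetilde\Theta,\widetilde w)$ that is a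 local minimizer of this problem; in particular $\widetilde\Theta$ minimizes the objective over the feasible $\Theta$ with $w$ fixed at $\widetilde w$. *)

theory Defs
  imports "HOL-Analysis.Analysis"
begin

type_synonym 'p sqmat = "real^'p^'p"

definition mat_inner :: "'p::finite sqmat \<Rightarrow> 'p sqmat \<Rightarrow> real" where
  "mat_inner U V = trace (U ** transpose V)"

definition l1_norm :: "'p::finite sqmat \<Rightarrow> real" where
  "l1_norm U = (\<Sum>i\<in>UNIV. \<Sum>j\<in>UNIV. \<bar>U$i$j\<bar>)"

definition linf_norm :: "'p::finite sqmat \<Rightarrow> real" where
  "linf_norm U = Max {\<bar>U$i$j\<bar> | i j. True}"

definition l1_off_norm :: "'p::finite sqmat \<Rightarrow> real" where
  "l1_off_norm U = (\<Sum>i\<in>UNIV. \<Sum>j\<in>UNIV. if i \<noteq> j then \<bar>U$i$j\<bar> else 0)"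

definition frob_norm :: "'p::finite sqmat \<Rightarrow> real" where
  "frob_norm U = sqrt (\<Sum>i\<in>UNIV. \<Sum>j\<in>UNIV. (U$i$j)\<^sup>2)"

definition symmetric_mat :: "'p::finite sqmat \<Rightarrow> bool" where
  "symmetric_mat A \<longleftrightarrow> transpose A = A"

definition pos_def :: "'p::finite sqmat \<Rightarrow> bool" where
  "pos_def A \<longleftrightarrow> symmetric_mat A \<and> (\<forall>x. x \<noteq> 0 \<longrightarrow> x \<bullet> (A *v x) > 0)"

definition outer :: "real^'p \<Rightarrow> real^'p^'p" where
  "outer x = (\<chi> i j. x$i * x$j)"

definition wcov :: "real \<Rightarrow> ('n::finite \<Rightarrow> real^'p::finite) \<Rightarrow> real^'n \<Rightarrow> 'p sqmat" where
  "wcov h X w = (1 / h) *\<^sub>R (\<Sum>i\<in>UNIV. (w$i) *\<^sub>R outer (X i))"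

definition tgl_objective ::
  "real \<Rightarrow> real \<Rightarrow> ('n::finite \<Rightarrow> real^'p::finite) \<Rightarrow> 'p sqmat \<Rightarrow> real^'n \<Rightarrow> real" where
  "tgl_objective h lam X Theta w =
     mat_inner Theta (wcov h X w) - ln (det Theta) + lam * l1_off_norm Theta"

definition tgl_feasible ::
  "real \<Rightarrow> real \<Rightarrow> 'p::finite sqmat \<Rightarrow> real^'n::finite \<Rightarrow> bool" where
  "tgl_feasible h R Theta w \<longleftrightarrow>
     symmetric_mat Theta \<and> pos_def Theta \<and> (\<forall>i. 0 \<le> w$i \<and> w$i \<le> 1) \<and>
     (\<Sum>i\<in>UNIV. w$i) = h \<and> l1_norm Theta \<le> R"

definition tgl_local_opt ::
  "real \<Rightarrow> real \<Rightarrow> real \<Rightarrow> ('n::finite \<Rightarrow> real^'p::finite) \<Rightarrow> 'p sqmat \<Rightarrow> real^'n \<Rightarrow> bool" where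
  "tgl_local_opt h R lam X Theta w \<longleftrightarrow>
     tgl_feasible h R Theta w \<and>
     (\<exists>e>0. \<forall>Theta' w'. tgl_feasible h R Theta' w' \<and> dist (Theta', w') (Theta, w) < e \<longrightarrow>
        tgl_objective h lam X Theta w \<le> tgl_objective h lam X Theta' w')"

end

theory Submission
  imports Defs
begin

text \<open>
  With the weights fixed, a local optimum \<open>\<Theta>\<close> is optimal along the feasible segment towards
  \<open>\<Theta>*\<close>, and Jacobi's formula \<open>d/dt log det (\<Theta> + t E) = tr (\<Theta>\<^sup>-\<^sup>1 E)\<close> turns this into the
  variational inequality \<open>\<langle>\<langle>\<Theta>\<^sup>-\<^sup>1, \<Theta>* - \<Theta>\<rangle>\<rangle> \<le> \<langle>\<langle>\<Theta>* - \<Theta>, S\<^sub>w\<rangle>\<rangle> + \<lambda> (\<parallel>\<Theta>*\<parallel>\<^sub>o\<^sub>f\<^sub>f - \<parallel>\<Theta>\<parallel>\<^sub>o\<^sub>f\<^sub>f)\<close>.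
  Splitting the weighted covariance \<open>S\<^sub>w\<close> into its part with weights \<open>w*\<close> (controlled by the
  lower bound on \<open>\<lambda>\<close>) and the trimmed part (controlled by incoherence) yields the basic
  inequality \<open>\<langle>\<langle>\<Theta>*\<^sup>-\<^sup>1 - \<Theta>\<^sup>-\<^sup>1, \<Delta>\<rangle>\<rangle> \<le> \<lambda> (\<parallel>\<Theta>*\<parallel>\<^sub>o\<^sub>f\<^sub>f - \<parallel>\<Theta>\<parallel>\<^sub>o\<^sub>f\<^sub>f) + \<lambda>/2 \<parallel>\<Delta>\<parallel>\<^sub>1 + \<tau>\<^sub>1 \<parallel>\<Delta>\<parallel>\<^sub>F\<close>.
  Since the inverse is antimonotone on positive definite matrices (a Schur product argument),
  restricted strong convexity propagates linearly outside the unit Frobenius ball, where it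
  would contradict the upper bound on \<open>\<lambda>\<close>; hence \<open>\<parallel>\<Delta>\<parallel>\<^sub>F \<le> 1\<close> and it applies directly.
  Splitting \<open>\<Delta>\<close> between the support of \<open>\<Theta>*\<close> together with the diagonal (at most \<open>k + p\<close>
  entries) and the rest finishes the argument as for the ordinary graphical lasso.

  The hypotheses on \<open>p\<close>, \<open>G\<close> and \<open>B\<close> only matter for verifying (i)--(iii) probabilistically;
  the bound itself is deterministic and does not use them.
\<close>

section \<open>Quadratic forms and positive semidefinite matrices\<close>

definition quad_form :: "'p::finite sqmat \<Rightarrow> real^'p \<Rightarrow> real^'p \<Rightarrow> real" where
  "quad_form A x y = (\<Sum>i\<in>UNIV. \<Sum>j\<in>UNIV. x$i * A$i$j * y$j)"

definition psd :: "'p::finite sqmat \<Rightarrow> bool" where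
  "psd A \<longleftrightarrow> (\<forall>i j. A$i$j = A$j$i) \<and> (\<forall>x. 0 \<le> quad_form A x x)"

lemma inner_matrix_vector_mult: "x \<bullet> ((A::'p::finite sqmat) *v y) = quad_form A x y"
  by (simp add: quad_form_def inner_vec_def matrix_vector_mult_def sum_distrib_left mult.assoc)

lemma symmetric_mat_iff: "symmetric_mat A \<longleftrightarrow> (\<forall>i j. A$i$j = A$j$i)"
  unfolding symmetric_mat_def transpose_def vec_eq_iff by auto

lemma symmetric_iff_transpose_eq: "(\<forall>i j. A$i$j = A$j$i) \<longleftrightarrow> transpose A = A"
  unfolding transpose_def vec_eq_iff by auto

lemma quad_form_commute: "\<forall>i j. A$i$j = A$j$i \<Longrightarrow> quad_form A x y = quad_form A y x"
  unfolding quad_form_def by (subst sum.swap) (simp add: mult_ac)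

lemma quad_form_add_scaleR:
  "quad_form A (x + t *\<^sub>R y) (x + t *\<^sub>R y)
     = quad_form A x x + t * quad_form A x y + t * quad_form A y x + t\<^sup>2 * quad_form A y y"
  unfolding quad_form_def by (simp add: algebra_simps sum.distrib sum_distrib_left power2_eq_square)

lemma quad_form_axis_right: "quad_form A x (axis a 1) = (\<Sum>i\<in>UNIV. x$i * A$i$a)"
  by (simp add: quad_form_def axis_def if_distrib[of "\<lambda>c. _ * c"] cong: if_cong)

lemma quad_form_axis: "quad_form A (axis a 1) (axis b 1) = A$a$b"
  unfolding quad_form_axis_right by (simp add: axis_def if_distrib[of "\<lambda>c. c * _"] cong: if_cong)

lemma nonneg_quadratic_discriminant:
  fixes a b c :: real
  assumes "\<forall>t. 0 \<le> a + 2*b*t + c*t\<^sup>2" "0 \<le> c"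
  shows "b\<^sup>2 \<le> a*c"
proof (cases "c = 0")
  case True
  have "b = 0"
  proof (rule ccontr)
    assume "b \<noteq> 0"
    have "0 \<le> a + 2*b*(-(a+1)/(2*b)) + c*(-(a+1)/(2*b))\<^sup>2" using assms(1) by blast
    then show False using \<open>b \<noteq> 0\<close> True by (simp add: field_simps)
  qed
  then show ?thesis using True by simp
next
  case False
  then have c: "c > 0" using assms(2) by simp
  have "0 \<le> a + 2*b*(-b/c) + c*(-b/c)\<^sup>2" using assms(1) by blast
  also have "\<dots> = a - b\<^sup>2/c" using c by (simp add: field_simps power2_eq_square)
  finally show ?thesis using c by (simp add: field_simps)
qed

lemma psd_Cauchy_Schwarz:
  assumes "psd A"
  shows "(quad_form A x y)\<^sup>2 \<le> quad_form A x x * quad_form A y y"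
proof -
  have sym: "\<forall>i j. A$i$j = A$j$i" and nonneg: "\<And>z. 0 \<le> quad_form A z z"
    using assms unfolding psd_def by auto
  have "0 \<le> quad_form A x x + 2 * quad_form A x y * t + quad_form A y y * t\<^sup>2" for t
    using nonneg[of "x + t *\<^sub>R y"]
    unfolding quad_form_add_scaleR quad_form_commute[OF sym, of y x] by (simp add: algebra_simps)
  then show ?thesis using nonneg_quadratic_discriminant nonneg[of y] by blast
qed

lemma psd_zero_diagonal_row:
  assumes "psd A" "A$a$a = 0"
  shows "A$a$j = 0"
  using psd_Cauchy_Schwarz[OF assms(1), of "axis a 1" "axis j 1"] assms(2)
  by (simp add: quad_form_axis)

text \<open>Induction on the rows carrying the support of \<open>P\<close>: subtracting the rank-one matrix
  \<open>u u\<^sup>T\<close>, \<open>u = P e\<^sub>a / sqrt (P\<^sub>a\<^sub>a)\<close>, keeps \<open>P\<close> positive semidefinite, kills row \<open>a\<close>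
  and changes the entrywise pairing by \<open>quad_form Q u u \<ge> 0\<close>.\<close>

lemma psd_entrywise_pairing_nonneg_supported:
  assumes "finite S" "psd Q"
  shows "psd P \<Longrightarrow> (\<forall>i j. i \<notin> S \<longrightarrow> P$i$j = 0) \<Longrightarrow> 0 \<le> (\<Sum>i\<in>UNIV. \<Sum>j\<in>UNIV. P$i$j * Q$i$j)"
  using assms(1)
proof (induction S arbitrary: P rule: finite_induct)
  case empty
  then show ?case by simp
next
  case (insert a S)
  have Psym: "\<forall>i j. P$i$j = P$j$i" and Pnonneg: "\<And>x. 0 \<le> quad_form P x x"
    using insert.prems(1) unfolding psd_def by auto
  show ?case
  proof (cases "P$a$a = 0")
    case True
    then have "\<forall>i j. i \<notin> S \<longrightarrow> P$i$j = 0"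
      using insert.prems psd_zero_diagonal_row by (metis insertE)
    then show ?thesis using insert.IH insert.prems(1) by blast
  next
    case False
    then have paa: "P$a$a > 0"
      using Pnonneg[of "axis a 1"] by (simp add: quad_form_axis)
    define u :: "real^'a" where "u = (\<chi> i. P$i$a / sqrt (P$a$a))"
    define P' :: "'a sqmat" where "P' = (\<chi> i j. P$i$j - u$i * u$j)"
    have uu: "u$i * u$j = P$i$a * P$j$a / P$a$a" for i j
      using paa by (simp add: u_def field_simps real_sqrt_mult[symmetric])
    have "quad_form P' x x = quad_form P x x - (quad_form P x (axis a 1))\<^sup>2 / P$a$a" for x
    proof -
      have "quad_form P' x x = quad_form P x x - (\<Sum>i\<in>UNIV. \<Sum>j\<in>UNIV. x$i * (u$i * u$j) * x$j)"
        by (simp add: quad_form_def P'_def algebra_simps sum_subtractf)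
      also have "(\<Sum>i\<in>UNIV. \<Sum>j\<in>UNIV. x$i * (u$i * u$j) * x$j) = (\<Sum>i\<in>UNIV. x$i * u$i)\<^sup>2"
        by (simp add: power2_eq_square sum_product mult_ac)
      also have "(\<Sum>i\<in>UNIV. x$i * u$i) = quad_form P x (axis a 1) / sqrt (P$a$a)"
        by (simp add: quad_form_axis_right u_def sum_divide_distrib)
      finally show ?thesis using paa by (simp add: power_divide)
    qed
    moreover have "(quad_form P x (axis a 1))\<^sup>2 / P$a$a \<le> quad_form P x x" for x
      using psd_Cauchy_Schwarz[OF insert.prems(1), of x "axis a 1"] paa
      by (simp add: quad_form_axis divide_le_eq)
    ultimately have "psd P'"
      using Psym unfolding psd_def by (simp add: P'_def mult.commute)
    moreover have "P'$i$j = 0" if "i \<notin> S" for i j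
    proof (cases "i = a")
      case True
      then show ?thesis using paa Psym by (simp add: P'_def uu)
    next
      case False
      then show ?thesis using insert.prems(2) \<open>i \<notin> S\<close> by (simp add: P'_def u_def)
    qed
    ultimately have "0 \<le> (\<Sum>i\<in>UNIV. \<Sum>j\<in>UNIV. P'$i$j * Q$i$j)"
      using insert.IH by blast
    moreover have "0 \<le> quad_form Q u u" using assms(2) unfolding psd_def by blast
    moreover have "(\<Sum>i\<in>UNIV. \<Sum>j\<in>UNIV. P$i$j * Q$i$j)
        = (\<Sum>i\<in>UNIV. \<Sum>j\<in>UNIV. P'$i$j * Q$i$j) + quad_form Q u u"
      by (simp add: P'_def quad_form_def algebra_simps sum.distrib[symmetric])
    ultimately show ?thesis by simp
  qed
qed

lemma psd_entrywise_pairing_nonneg: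
  "psd P \<Longrightarrow> psd Q \<Longrightarrow> 0 \<le> (\<Sum>i\<in>UNIV. \<Sum>j\<in>UNIV. P$i$j * Q$i$j)"
  using psd_entrywise_pairing_nonneg_supported[of UNIV Q P] by simp

section \<open>Positive definite matrices and their inverses\<close>

lemma mat_inner_eq_sum: "mat_inner U V = (\<Sum>i\<in>UNIV. \<Sum>j\<in>UNIV. U$i$j * V$i$j)"
  by (simp add: mat_inner_def trace_def matrix_matrix_mult_def transpose_def)

lemma matrix_diff_ldistrib: "(A::'p::finite sqmat) ** (B - C) = A ** B - A ** C"
  by (simp add: matrix_matrix_mult_def vec_eq_iff sum_subtractf algebra_simps)

lemma matrix_diff_rdistrib: "((B::'p::finite sqmat) - C) ** A = B ** A - C ** A"
  by (simp add: matrix_matrix_mult_def vec_eq_iff sum_subtractf algebra_simps)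

lemma pos_def_symmetric: "pos_def A \<Longrightarrow> \<forall>i j. A$i$j = A$j$i"
  unfolding pos_def_def symmetric_mat_iff by simp

lemma pos_def_invertible: "pos_def (A::'p::finite sqmat) \<Longrightarrow> invertible A"
  unfolding pos_def_def
  by (metis inner_zero_right less_irrefl matrix_left_invertible_ker invertible_left_inverse)

lemma matrix_inv_inverse:
  fixes A :: "'p::finite sqmat"
  assumes "invertible A"
  shows "A ** matrix_inv A = mat 1" "matrix_inv A ** A = mat 1"
proof -
  have "\<exists>A'. A ** A' = mat 1 \<and> A' ** A = mat 1" using assms unfolding invertible_def by blast
  then have "A ** matrix_inv A = mat 1 \<and> matrix_inv A ** A = mat 1"
    unfolding matrix_inv_def by (rule someI_ex)
  then show "A ** matrix_inv A = mat 1" "matrix_inv A ** A = mat 1" by auto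
qed

lemma matrix_inv_unique:
  fixes A B :: "'p::finite sqmat"
  assumes "invertible A" "B ** A = mat 1"
  shows "B = matrix_inv A"
  by (metis assms matrix_inv_inverse(1) matrix_mul_assoc matrix_mul_lid matrix_mul_rid)

lemma pos_def_matrix_inv_symmetric:
  fixes A :: "'p::finite sqmat"
  assumes "pos_def A"
  shows "\<forall>i j. matrix_inv A $ i $ j = matrix_inv A $ j $ i"
proof -
  have inv: "invertible A" by (rule pos_def_invertible[OF assms])
  have "transpose A = A" using assms unfolding pos_def_def symmetric_mat_def by simp
  then have "transpose (matrix_inv A) ** A = mat 1"
    using matrix_inv_inverse(1)[OF inv] by (metis matrix_transpose_mul transpose_mat)
  then show ?thesis
    using matrix_inv_unique[OF inv] symmetric_iff_transpose_eq by metis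
qed

lemma pos_def_matrix_inv_psd:
  fixes A :: "'p::finite sqmat"
  assumes "pos_def A"
  shows "psd (matrix_inv A)"
proof -
  have inv: "invertible A" by (rule pos_def_invertible[OF assms])
  have "0 \<le> quad_form (matrix_inv A) x x" for x :: "real^'p"
  proof -
    define y where "y = matrix_inv A *v x"
    have "x = A *v y"
      unfolding y_def by (simp add: matrix_vector_mul_assoc matrix_inv_inverse[OF inv])
    then have "quad_form (matrix_inv A) x x = y \<bullet> (A *v y)"
      by (simp add: inner_matrix_vector_mult[symmetric] y_def inner_commute)
    then show ?thesis
      using assms unfolding pos_def_def by (metis inner_zero_left less_eq_real_def)
  qed
  then show ?thesis
    using pos_def_matrix_inv_symmetric[OF assms] unfolding psd_def by blast
qed

lemma psd_congruence:
  fixes D P :: "'p::finite sqmat"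
  assumes Dsym: "\<forall>i j. D$i$j = D$j$i" and "psd P"
  shows "psd (D ** P ** D)"
proof -
  have tD: "transpose D = D" using Dsym symmetric_iff_transpose_eq by blast
  have tP: "transpose P = P" using assms(2) symmetric_iff_transpose_eq unfolding psd_def by blast
  have "quad_form (D ** P ** D) x x = quad_form P (D *v x) (D *v x)" for x
  proof -
    have "quad_form (D ** P ** D) x x = (x v* D) \<bullet> (P *v (D *v x))"
      by (simp add: inner_matrix_vector_mult[symmetric] matrix_vector_mul_assoc
          matrix_mul_assoc dot_lmul_matrix)
    then show ?thesis by (metis tD vector_transpose_matrix inner_matrix_vector_mult)
  qed
  moreover have "transpose (D ** P ** D) = D ** P ** D"
    by (simp add: matrix_transpose_mul tD tP matrix_mul_assoc)
  ultimately show ?thesis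
    using assms(2) symmetric_iff_transpose_eq unfolding psd_def by metis
qed

text \<open>Operator monotonicity of the inverse in trace form: with \<open>D = A\<^sub>2 - A\<^sub>1\<close> one has
  \<open>A\<^sub>1\<^sup>-\<^sup>1 - A\<^sub>2\<^sup>-\<^sup>1 = A\<^sub>1\<^sup>-\<^sup>1 D A\<^sub>2\<^sup>-\<^sup>1\<close>, so the pairing is the entrywise pairing of the positive
  semidefinite matrices \<open>A\<^sub>1\<^sup>-\<^sup>1\<close> and \<open>D A\<^sub>2\<^sup>-\<^sup>1 D\<close>.\<close>

lemma mat_inner_matrix_inv_antimono:
  fixes A1 A2 :: "'p::finite sqmat"
  assumes "pos_def A1" "pos_def A2"
  shows "0 \<le> mat_inner (matrix_inv A1 - matrix_inv A2) (A2 - A1)"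
proof -
  have inv1: "invertible A1" and inv2: "invertible A2" using assms pos_def_invertible by auto
  define D where "D = A2 - A1"
  define P1 where "P1 = matrix_inv A1"
  define P2 where "P2 = matrix_inv A2"
  have Dsym: "\<forall>i j. D$i$j = D$j$i"
    using pos_def_symmetric[OF assms(1)] pos_def_symmetric[OF assms(2)] unfolding D_def by simp
  have "P1 ** A2 ** P2 = P1" "P1 ** A1 ** P2 = P2"
    using matrix_inv_inverse[OF inv1] matrix_inv_inverse[OF inv2]
    by (metis P2_def matrix_mul_assoc matrix_mul_rid, metis P1_def matrix_mul_lid)
  then have diff: "P1 - P2 = P1 ** D ** P2"
    by (simp add: D_def matrix_diff_ldistrib matrix_diff_rdistrib)
  have Q: "psd (D ** P2 ** D)"
    using psd_congruence[OF Dsym pos_def_matrix_inv_psd[OF assms(2)]] by (simp add: P2_def)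
  have "transpose D = D" using Dsym symmetric_iff_transpose_eq by blast
  then have "mat_inner (P1 ** D ** P2) D = trace (P1 ** (D ** P2 ** D))"
    unfolding mat_inner_def by (simp add: matrix_mul_assoc)
  also have "\<dots> = (\<Sum>i\<in>UNIV. \<Sum>j\<in>UNIV. P1$i$j * (D ** P2 ** D)$i$j)"
    using Q unfolding psd_def by (simp add: trace_def matrix_matrix_mult_def)
  also have "\<dots> \<ge> 0"
    using psd_entrywise_pairing_nonneg[OF pos_def_matrix_inv_psd[OF assms(1)] Q]
    by (simp add: P1_def)
  finally show ?thesis using diff by (simp add: P1_def P2_def D_def)
qed

section \<open>The derivative of the log-determinant\<close>

lemma permutation_fixed_points_prod_eq_0:
  assumes "p permutes (UNIV::'p::finite set)" "p \<noteq> id"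
  shows "(\<Prod>j\<in>UNIV-{i}. (if j = p j then (1::real) else 0)) = 0"
proof -
  obtain m where m: "p m \<noteq> m" using assms(2) by (metis eq_id_iff)
  have "\<exists>j. j \<noteq> i \<and> p j \<noteq> j"
  proof (cases "m = i")
    case True
    then have "p (p i) \<noteq> p i" using m permutes_inj[OF assms(1)] by (metis injD)
    then show ?thesis using m True by metis
  qed (use m in blast)
  then obtain j where "j \<noteq> i" "p j \<noteq> j" by blast
  then show ?thesis by (intro prod_zero bexI[of _ j]) auto
qed

text \<open>Only the identity permutation contributes to the first-order term of the Leibniz
  expansion of \<open>det (I + t M)\<close>.\<close>

lemma det_identity_plus_has_derivative:
  "((\<lambda>t. det (mat 1 + t *\<^sub>R (M::'p::finite sqmat))) has_field_derivative trace M) (at 0)"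
proof -
  let ?P = "{p. p permutes (UNIV::'p set)}"
  let ?f = "\<lambda>p i t. (if i = p i then 1 else 0) + t * M$i$(p i)"
  have det_eq: "det (mat 1 + t *\<^sub>R M) = (\<Sum>p\<in>?P. of_int (sign p) * (\<Prod>i\<in>UNIV. ?f p i t))" for t
    unfolding det_def by (simp add: mat_def)
  have deriv: "((\<lambda>t. \<Sum>p\<in>?P. of_int (sign p) * (\<Prod>i\<in>UNIV. ?f p i t)) has_field_derivative
      (\<Sum>p\<in>?P. of_int (sign p) * (\<Sum>i\<in>UNIV. M$i$(p i) * (\<Prod>j\<in>UNIV-{i}. ?f p j 0)))) (at 0)"
    by (intro DERIV_sum DERIV_cmult has_field_derivative_prod) (auto intro!: derivative_eq_intros)
  have "of_int (sign p) * (\<Sum>i\<in>UNIV. M$i$(p i) * (\<Prod>j\<in>UNIV-{i}. ?f p j 0))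
      = (if p = id then trace M else 0)" if "p \<in> ?P" for p
  proof (cases "p = id")
    case False
    have "M$i$(p i) * (\<Prod>j\<in>UNIV-{i}. ?f p j 0) = 0" for i
      using permutation_fixed_points_prod_eq_0[of p i] that False by simp
    then have "(\<Sum>i\<in>UNIV. M$i$(p i) * (\<Prod>j\<in>UNIV-{i}. ?f p j 0)) = 0"
      by (intro sum.neutral) blast
    then show ?thesis using False by simp
  qed (simp add: trace_def)
  then have "(\<Sum>p\<in>?P. of_int (sign p) * (\<Sum>i\<in>UNIV. M$i$(p i) * (\<Prod>j\<in>UNIV-{i}. ?f p j 0)))
      = (\<Sum>p\<in>?P. if p = id then trace M else 0)"
    by (rule sum.cong[OF refl])
  also have "\<dots> = trace M" by (simp add: sum.delta'[OF finite_permutations])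
  finally show ?thesis using deriv unfolding det_eq by simp
qed

lemma det_has_derivative:
  fixes A E :: "'p::finite sqmat"
  assumes "invertible A"
  shows "((\<lambda>t. det (A + t *\<^sub>R E)) has_field_derivative det A * trace (matrix_inv A ** E)) (at 0)"
proof -
  have factor: "A + t *\<^sub>R E = A ** (mat 1 + t *\<^sub>R (matrix_inv A ** E))" for t
    by (simp add: matrix_add_ldistrib matrix_scalar_ac scalar_matrix_assoc[symmetric]
        matrix_mul_assoc matrix_inv_inverse[OF assms])
  show ?thesis
    unfolding factor det_mul by (intro DERIV_cmult det_identity_plus_has_derivative)
qed

lemma quad_form_segment:
  "quad_form (T + t *\<^sub>R (S - T)) x x = (1 - t) * quad_form T x x + t * quad_form S x x"
  by (simp add: quad_form_def algebra_simps sum.distrib sum_distrib_left sum_subtractf)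

lemma pos_def_segment:
  assumes "pos_def T" "pos_def S" "0 \<le> t" "t \<le> 1"
  shows "pos_def (T + t *\<^sub>R (S - T))"
  unfolding pos_def_def symmetric_mat_iff
proof (intro conjI allI impI)
  fix i j show "(T + t *\<^sub>R (S - T)) $ i $ j = (T + t *\<^sub>R (S - T)) $ j $ i"
    using pos_def_symmetric[OF assms(1)] pos_def_symmetric[OF assms(2)] by simp
next
  fix x :: "real^'a" assume "x \<noteq> 0"
  then have "quad_form T x x > 0" "quad_form S x x > 0"
    using assms(1,2) unfolding pos_def_def by (simp_all add: inner_matrix_vector_mult)
  then have "(1 - t) * quad_form T x x + t * quad_form S x x > 0"
    using assms(3,4) by (cases "t = 1") (auto intro: add_pos_nonneg)
  then show "0 < x \<bullet> ((T + t *\<^sub>R (S - T)) *v x)"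
    by (simp add: inner_matrix_vector_mult quad_form_segment)
qed

text \<open>Along the segment from \<open>I\<close> to \<open>A\<close> the determinant is continuous and never zero.\<close>

lemma pos_def_det_pos:
  fixes A :: "'p::finite sqmat"
  assumes "pos_def A"
  shows "det A > 0"
proof (rule ccontr)
  assume "\<not> det A > 0"
  define M where "M t = mat 1 + t *\<^sub>R (A - mat 1)" for t :: real
  have "continuous_on {0..1} (\<lambda>t. det (M t))"
    unfolding M_def det_def by (simp add: mat_def) (intro continuous_intros)
  then obtain t where t: "0 \<le> t" "t \<le> 1" "det (M t) = 0"
    using IVT2'[of "\<lambda>t. det (M t)" 1 0 0] \<open>\<not> det A > 0\<close> by (auto simp: M_def)
  have "pos_def (mat 1 :: 'p sqmat)"
    unfolding pos_def_def symmetric_mat_def by simp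
  then have "pos_def (M t)" unfolding M_def using pos_def_segment[OF _ assms t(1,2)] by blast
  then show False
    using t(3) pos_def_invertible invertible_det_nz by blast
qed

lemma ln_det_has_derivative:
  fixes T E :: "'p::finite sqmat"
  assumes "pos_def T"
  shows "((\<lambda>t. ln (det (T + t *\<^sub>R E))) has_field_derivative trace (matrix_inv T ** E)) (at 0)"
proof -
  have "det T > 0" by (rule pos_def_det_pos[OF assms])
  have "((\<lambda>t. ln (det (T + t *\<^sub>R E))) has_field_derivative
      inverse (det (T + 0 *\<^sub>R E)) * (det T * trace (matrix_inv T ** E))) (at 0)"
    by (rule DERIV_chain2[OF DERIV_ln det_has_derivative[OF pos_def_invertible[OF assms]]])
      (simp add: \<open>det T > 0\<close>)
  moreover have "inverse (det T) * (det T * trace (matrix_inv T ** E)) = trace (matrix_inv T ** E)"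
    using \<open>det T > 0\<close> by simp
  ultimately show ?thesis by simp
qed

lemma mat_inner_commute: "mat_inner A B = mat_inner B A"
  by (simp add: mat_inner_eq_sum mult.commute)

lemma mat_inner_diff_left: "mat_inner (A - B) C = mat_inner A C - mat_inner B C"
  by (simp add: mat_inner_eq_sum algebra_simps sum_subtractf)

lemma mat_inner_add_left: "mat_inner (A + B) C = mat_inner A C + mat_inner B C"
  by (simp add: mat_inner_eq_sum algebra_simps sum.distrib)

lemma mat_inner_minus_left: "mat_inner (- A) B = - mat_inner A B"
  by (simp add: mat_inner_eq_sum sum_negf)

lemma mat_inner_minus_right: "mat_inner A (- B) = - mat_inner A B"
  by (simp add: mat_inner_eq_sum sum_negf)

lemma mat_inner_scaleR_left: "mat_inner (t *\<^sub>R A) B = t * mat_inner A B"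
  by (simp add: mat_inner_eq_sum sum_distrib_left mult_ac)

lemma mat_inner_scaleR_right: "mat_inner A (t *\<^sub>R B) = t * mat_inner A B"
  by (simp add: mat_inner_eq_sum sum_distrib_left mult_ac)

lemma wcov_add: "wcov h X (a + b) = wcov h X a + wcov h X b"
  by (simp add: wcov_def sum.distrib scaleR_add_left scaleR_add_right)

lemma l1_norm_nonneg: "0 \<le> l1_norm A"
  by (simp add: l1_norm_def sum_nonneg)

lemma l1_off_norm_nonneg: "0 \<le> l1_off_norm A"
  by (simp add: l1_off_norm_def sum_nonneg)

lemma frob_norm_nonneg: "0 \<le> frob_norm A"
  by (simp add: frob_norm_def sum_nonneg)

lemma l1_off_norm_le_l1_norm: "l1_off_norm A \<le> l1_norm A"
  unfolding l1_off_norm_def l1_norm_def by (intro sum_mono) auto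

lemma l1_norm_diff_le: "l1_norm (A - B) \<le> l1_norm A + l1_norm B"
  unfolding l1_norm_def sum.distrib[symmetric] by (intro sum_mono) (simp add: abs_triangle_ineq4)

lemma frob_norm_scaleR: "frob_norm (t *\<^sub>R A) = \<bar>t\<bar> * frob_norm A"
proof -
  have "(\<Sum>i\<in>UNIV. \<Sum>j\<in>UNIV. ((t *\<^sub>R A)$i$j)\<^sup>2) = t\<^sup>2 * (\<Sum>i\<in>UNIV. \<Sum>j\<in>UNIV. (A$i$j)\<^sup>2)"
    by (simp add: power_mult_distrib sum_distrib_left)
  then show ?thesis by (simp add: frob_norm_def real_sqrt_mult)
qed

lemma abs_entry_le_linf_norm: "\<bar>U$i$j\<bar> \<le> linf_norm (U::'p::finite sqmat)"
proof -
  have "{\<bar>U$i$j\<bar> | i j. True} = (\<lambda>(i, j). \<bar>U$i$j\<bar>) ` UNIV" by auto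
  then have "finite {\<bar>U$i$j\<bar> | i j. True}" by simp
  then show ?thesis unfolding linf_norm_def by (rule Max_ge) blast
qed

lemma abs_mat_inner_le: "\<bar>mat_inner U V\<bar> \<le> linf_norm U * l1_norm (V::'p::finite sqmat)"
proof -
  have "\<bar>mat_inner U V\<bar> \<le> (\<Sum>i\<in>UNIV. \<Sum>j\<in>UNIV. \<bar>U$i$j * V$i$j\<bar>)"
    unfolding mat_inner_eq_sum by (rule order_trans[OF sum_abs sum_mono[OF sum_abs]])
  also have "\<dots> \<le> (\<Sum>i\<in>UNIV. \<Sum>j\<in>UNIV. linf_norm U * \<bar>V$i$j\<bar>)"
    by (intro sum_mono) (simp add: abs_mult mult_right_mono abs_entry_le_linf_norm)
  also have "\<dots> = linf_norm U * l1_norm V" by (simp add: l1_norm_def sum_distrib_left)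
  finally show ?thesis .
qed

lemma abs_segment_le:
  assumes "0 \<le> t" "t \<le> 1"
  shows "\<bar>(a::real) + t * (b - a)\<bar> \<le> (1 - t) * \<bar>a\<bar> + t * \<bar>b\<bar>"
proof -
  have "\<bar>a + t * (b - a)\<bar> = \<bar>(1 - t) * a + t * b\<bar>" by (simp add: algebra_simps)
  also have "\<dots> \<le> (1 - t) * \<bar>a\<bar> + t * \<bar>b\<bar>"
    using abs_triangle_ineq[of "(1 - t) * a" "t * b"] assms by (simp add: abs_mult)
  finally show ?thesis .
qed

lemma l1_norm_segment:
  assumes "0 \<le> t" "t \<le> 1"
  shows "l1_norm (T + t *\<^sub>R (S - T)) \<le> (1 - t) * l1_norm T + t * l1_norm S"
proof -
  have "l1_norm (T + t *\<^sub>R (S - T)) \<le> (\<Sum>i\<in>UNIV. \<Sum>j\<in>UNIV. (1 - t) * \<bar>T$i$j\<bar> + t * \<bar>S$i$j\<bar>)"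
    unfolding l1_norm_def by (intro sum_mono) (simp add: abs_segment_le assms)
  also have "\<dots> = (1 - t) * l1_norm T + t * l1_norm S"
    by (simp add: l1_norm_def sum.distrib sum_distrib_left)
  finally show ?thesis .
qed

lemma l1_off_norm_segment:
  assumes "0 \<le> t" "t \<le> 1"
  shows "l1_off_norm (T + t *\<^sub>R (S - T)) \<le> (1 - t) * l1_off_norm T + t * l1_off_norm S"
proof -
  have "l1_off_norm (T + t *\<^sub>R (S - T))
      \<le> (\<Sum>i\<in>UNIV. \<Sum>j\<in>UNIV. (1 - t) * (if i \<noteq> j then \<bar>T$i$j\<bar> else 0)
                              + t * (if i \<noteq> j then \<bar>S$i$j\<bar> else 0))"
    unfolding l1_off_norm_def by (intro sum_mono) (simp add: abs_segment_le assms)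
  also have "\<dots> = (1 - t) * l1_off_norm T + t * l1_off_norm S"
    by (simp add: l1_off_norm_def sum.distrib sum_distrib_left)
  finally show ?thesis .
qed

section \<open>First-order optimality of a local optimum\<close>

lemma DERIV_le_of_right_difference_bound:
  fixes f :: "real \<Rightarrow> real"
  assumes "DERIV f 0 :> l" "b > 0" "\<And>t. 0 < t \<Longrightarrow> t < b \<Longrightarrow> f t - f 0 \<le> t * c"
  shows "l \<le> c"
proof (rule ccontr)
  assume "\<not> l \<le> c"
  have "DERIV (\<lambda>t. f t - t * c) 0 :> l - c"
    using assms(1) by (auto intro!: derivative_eq_intros)
  from DERIV_pos_inc_right[OF this] \<open>\<not> l \<le> c\<close>
  obtain d where "d > 0" and d: "\<And>t. 0 < t \<Longrightarrow> t < d \<Longrightarrow> f 0 < f t - t * c"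
    by auto
  define t where "t = min d b / 2"
  have "0 < t" "t < d" "t < b" using \<open>d > 0\<close> \<open>b > 0\<close> by (auto simp: t_def)
  then show False using d assms(3) by fastforce
qed

lemma tgl_local_opt_segment:
  fixes T Ts :: "'p::finite sqmat" and w :: "real^'n::finite"
  assumes opt: "tgl_local_opt h R lam X T w" and Ts: "pos_def Ts" "l1_norm Ts \<le> R"
  obtains b where "0 < b" "b \<le> 1"
    "\<And>t. 0 < t \<Longrightarrow> t < b \<Longrightarrow> tgl_objective h lam X T w \<le> tgl_objective h lam X (T + t *\<^sub>R (Ts - T)) w"
proof -
  have feas: "tgl_feasible h R T w" using opt unfolding tgl_local_opt_def by blast
  then have T: "pos_def T" "l1_norm T \<le> R" unfolding tgl_feasible_def by auto
  obtain e where "e > 0" and loc: "\<And>Th w'. tgl_feasible h R Th w' \<Longrightarrow> dist (Th, w') (T, w) < e \<Longrightarrow>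
      tgl_objective h lam X T w \<le> tgl_objective h lam X Th w'"
    using opt unfolding tgl_local_opt_def by blast
  define b where "b = min 1 (e / (norm (Ts - T) + 1))"
  have N: "norm (Ts - T) + 1 > 0" by (simp add: add_nonneg_pos)
  have "0 < b" "b \<le> 1" using \<open>e > 0\<close> N by (simp_all add: b_def)
  moreover have "tgl_objective h lam X T w \<le> tgl_objective h lam X (T + t *\<^sub>R (Ts - T)) w"
    if t: "0 < t" "t < b" for t
  proof (rule loc)
    have "t \<le> 1" using t by (simp add: b_def)
    have "(1 - t) * l1_norm T + t * l1_norm Ts \<le> (1 - t) * R + t * R"
      using T(2) Ts(2) t \<open>t \<le> 1\<close> by (intro add_mono mult_left_mono) auto
    then have "l1_norm (T + t *\<^sub>R (Ts - T)) \<le> (1 - t) * R + t * R"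
      using l1_norm_segment[of t T Ts] t \<open>t \<le> 1\<close> by linarith
    then show "tgl_feasible h R (T + t *\<^sub>R (Ts - T)) w"
      using pos_def_segment[OF T(1) Ts(1)] t \<open>t \<le> 1\<close> feas
      unfolding tgl_feasible_def pos_def_def by (simp add: algebra_simps)
    have "t * norm (Ts - T) < e"
    proof -
      have "t * norm (Ts - T) \<le> t * (norm (Ts - T) + 1)" using t by simp
      also have "\<dots> < e / (norm (Ts - T) + 1) * (norm (Ts - T) + 1)"
        using t N by (intro mult_strict_right_mono) (auto simp: b_def)
      also have "\<dots> = e" using N by simp
      finally show ?thesis .
    qed
    then show "dist (T + t *\<^sub>R (Ts - T), w) (T, w) < e"
      using t by (simp add: dist_Pair_Pair dist_norm)
  qed
  ultimately show ?thesis using that by blast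
qed

text \<open>Differentiating \<open>log det\<close> along the feasible segment from \<open>T\<close> towards \<open>Ts\<close>, with \<open>w\<close> fixed.\<close>

lemma tgl_first_order_condition:
  fixes T Ts :: "'p::finite sqmat" and w :: "real^'n::finite"
  assumes opt: "tgl_local_opt h R lam X T w"
    and Ts: "pos_def Ts" "l1_norm Ts \<le> R" and "0 \<le> lam"
  shows "mat_inner (matrix_inv T) (Ts - T)
           \<le> mat_inner (Ts - T) (wcov h X w) + lam * (l1_off_norm Ts - l1_off_norm T)"
proof -
  define E where "E = Ts - T"
  define c where "c = mat_inner E (wcov h X w) + lam * (l1_off_norm Ts - l1_off_norm T)"
  have T: "pos_def T"
    using opt unfolding tgl_local_opt_def tgl_feasible_def by blast
  obtain b where "b > 0" "b \<le> 1" and b: "\<And>t. 0 < t \<Longrightarrow> t < b \<Longrightarrow>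
      tgl_objective h lam X T w \<le> tgl_objective h lam X (T + t *\<^sub>R E) w"
    using tgl_local_opt_segment[OF opt Ts] unfolding E_def by blast
  have "ln (det (T + t *\<^sub>R E)) - ln (det (T + 0 *\<^sub>R E)) \<le> t * c" if t: "0 < t" "t < b" for t
  proof -
    have "ln (det (T + t *\<^sub>R E)) - ln (det T)
        \<le> t * mat_inner E (wcov h X w) + lam * (l1_off_norm (T + t *\<^sub>R E) - l1_off_norm T)"
      using b[OF t] by (simp add: tgl_objective_def mat_inner_add_left mat_inner_scaleR_left
          algebra_simps)
    also have "\<dots> \<le> t * mat_inner E (wcov h X w) + lam * (t * (l1_off_norm Ts - l1_off_norm T))"
      using l1_off_norm_segment[of t T Ts] t \<open>b \<le> 1\<close> \<open>0 \<le> lam\<close>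
      unfolding E_def[symmetric] by (intro add_left_mono mult_left_mono) (auto simp: algebra_simps)
    finally show ?thesis by (simp add: c_def algebra_simps)
  qed
  then have "trace (matrix_inv T ** E) \<le> c"
    by (rule DERIV_le_of_right_difference_bound[OF ln_det_has_derivative[OF T] \<open>b > 0\<close>])
  moreover have "transpose E = E"
    using pos_def_symmetric[OF T] pos_def_symmetric[OF Ts(1)] symmetric_iff_transpose_eq
    unfolding E_def by (metis vector_minus_component)
  ultimately show ?thesis unfolding mat_inner_def c_def E_def by simp
qed

section \<open>Sparsity and the cone condition\<close>

lemma sum_pairs_eq_double_sum: "(\<Sum>x\<in>UNIV. f (fst x) (snd x)) = (\<Sum>i\<in>UNIV. \<Sum>j\<in>UNIV. f i j)"
  by (simp add: sum.cartesian_product split_beta)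

lemma sum_abs_entries_le_frob_norm:
  fixes D :: "'p::finite sqmat"
  shows "(\<Sum>x\<in>S. \<bar>D $ fst x $ snd x\<bar>) \<le> sqrt (card S) * frob_norm D"
proof -
  let ?g = "\<lambda>x. \<bar>D $ fst x $ snd x\<bar>"
  have "(\<Sum>x\<in>S. ?g x)\<^sup>2 \<le> (\<Sum>x\<in>S. (?g x)\<^sup>2) * card S"
    by (rule sum_squared_le_sum_of_squares)
  also have "\<dots> \<le> (frob_norm D)\<^sup>2 * card S"
  proof (intro mult_right_mono)
    have "(\<Sum>x\<in>S. (?g x)\<^sup>2) \<le> (\<Sum>x\<in>UNIV. (?g x)\<^sup>2)" by (intro sum_mono2) auto
    also have "\<dots> = (frob_norm D)\<^sup>2"
      unfolding sum_pairs_eq_double_sum[of "\<lambda>i j. \<bar>D$i$j\<bar>\<^sup>2"] by (simp add: frob_norm_def sum_nonneg)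
    finally show "(\<Sum>x\<in>S. (?g x)\<^sup>2) \<le> (frob_norm D)\<^sup>2" .
  qed simp
  finally have "(\<Sum>x\<in>S. ?g x)\<^sup>2 \<le> (sqrt (card S) * frob_norm D)\<^sup>2"
    by (simp add: power_mult_distrib mult.commute)
  then show ?thesis by (rule power2_le_imp_le) (simp add: frob_norm_nonneg)
qed

text \<open>Split \<open>\<Delta> = T - Ts\<close> into its mass \<open>a\<close> on the support of \<open>Ts\<close> together with the
  diagonal (at most \<open>k + p\<close> entries) and its mass \<open>b\<close> elsewhere.  Off the support
  \<open>|T\<^sub>i\<^sub>j| = |\<Delta>\<^sub>i\<^sub>j|\<close>, on it \<open>|Ts\<^sub>i\<^sub>j| - |T\<^sub>i\<^sub>j| \<le> |\<Delta>\<^sub>i\<^sub>j|\<close>.\<close>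

lemma sparse_support_split:
  fixes T Ts :: "'p::finite sqmat"
  assumes sparse: "card {(i, j). i \<noteq> j \<and> Ts$i$j \<noteq> 0} \<le> k"
  obtains a b where "0 \<le> a" "0 \<le> b" "l1_norm (T - Ts) = a + b"
    "l1_off_norm Ts - l1_off_norm T \<le> a - b"
    "a \<le> sqrt (real k + real CARD('p)) * frob_norm (T - Ts)"
proof -
  define D where "D = T - Ts"
  define g where "g x = \<bar>D $ fst x $ snd x\<bar>" for x :: "'p \<times> 'p"
  define S where "S = {x :: 'p \<times> 'p. fst x = snd x \<or> Ts $ fst x $ snd x \<noteq> 0}"
  define a where "a = sum g S"
  define b where "b = sum g (UNIV - S)"
  have "0 \<le> a" "0 \<le> b" unfolding a_def b_def g_def by (auto intro: sum_nonneg)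
  moreover have "l1_norm D = a + b"
    using sum.subset_diff[of S UNIV g]
    unfolding l1_norm_def g_def a_def b_def sum_pairs_eq_double_sum[symmetric] by simp
  moreover have "l1_off_norm Ts - l1_off_norm T \<le> a - b"
  proof -
    have "l1_off_norm Ts - l1_off_norm T
        = (\<Sum>i\<in>UNIV. \<Sum>j\<in>UNIV. if i \<noteq> j then \<bar>Ts $ i $ j\<bar> - \<bar>T $ i $ j\<bar> else 0)"
      unfolding l1_off_norm_def sum_subtractf[symmetric] by (intro sum.cong refl) auto
    also have "\<dots> = (\<Sum>x\<in>UNIV. if fst x \<noteq> snd x
                         then \<bar>Ts $ fst x $ snd x\<bar> - \<bar>T $ fst x $ snd x\<bar> else 0)"
      by (rule sum_pairs_eq_double_sum[symmetric])
    also have "\<dots> \<le> (\<Sum>x\<in>UNIV. (if x \<in> S then g x else 0) - (if x \<in> UNIV - S then g x else 0))"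
      by (intro sum_mono) (auto simp: g_def S_def D_def abs_triangle_ineq3)
    also have "\<dots> = a - b"
      unfolding sum_subtractf sum.inter_restrict[OF finite, symmetric] a_def b_def by simp
    finally show ?thesis .
  qed
  moreover have "a \<le> sqrt (real k + real CARD('p)) * frob_norm D"
  proof -
    have "S = {(i, j). i \<noteq> j \<and> Ts$i$j \<noteq> 0} \<union> (\<lambda>i. (i, i)) ` UNIV" unfolding S_def by auto
    then have "card S \<le> card {(i, j). i \<noteq> j \<and> Ts$i$j \<noteq> 0} + card ((\<lambda>i. (i, i)) ` (UNIV :: 'p set))"
      by (simp add: card_Un_le)
    also have "card ((\<lambda>i. (i, i)) ` (UNIV :: 'p set)) = CARD('p)"
      by (rule card_image) (auto simp: inj_on_def)
    finally have "real (card S) \<le> real k + real CARD('p)" using sparse by linarith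
    then have "sqrt (card S) * frob_norm D \<le> sqrt (real k + real CARD('p)) * frob_norm D"
      by (intro mult_right_mono frob_norm_nonneg) simp
    then show ?thesis
      using sum_abs_entries_le_frob_norm[of D S] unfolding a_def g_def by linarith
  qed
  ultimately show ?thesis using that unfolding D_def by blast
qed

lemma error_bounds_of_basic_inequality:
  fixes kappa lam tau s f a b off :: real
  assumes "kappa > 0" "lam > 0" "tau \<ge> 0" "s \<ge> 0" "f \<ge> 0" "a \<ge> 0" "b \<ge> 0"
    and basic: "kappa * f\<^sup>2 \<le> lam * (a - b) + lam / 2 * (a + b) + tau * f"
    and a: "a \<le> s * f" and off: "off \<le> a + b"
  shows "f \<le> (1 / kappa) * (3 * lam * s / 2 + tau)"
    and "off \<le> (2 / (lam * kappa)) * (3 * lam * s + tau)\<^sup>2"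
proof -
  have "lam * (a - b) + lam / 2 * (a + b) = 3 * lam / 2 * a - lam / 2 * b"
    by (simp add: algebra_simps)
  then have basic': "kappa * f\<^sup>2 + lam / 2 * b \<le> 3 * lam / 2 * a + tau * f"
    using basic by linarith
  have "3 * lam / 2 * a \<le> 3 * lam / 2 * (s * f)" using a assms(2) by simp
  moreover have "0 \<le> lam / 2 * b" using assms(2,7) by simp
  moreover have "kappa * f * f = kappa * f\<^sup>2" "3 * lam / 2 * (s * f) + tau * f = (3 * lam * s / 2 + tau) * f"
    by (simp_all add: algebra_simps power2_eq_square)
  ultimately have kff: "kappa * f * f \<le> (3 * lam * s / 2 + tau) * f"
    using basic' by linarith
  have F: "f \<le> (3 * lam * s / 2 + tau) / kappa"
  proof (cases "f = 0")
    case False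
    then have "kappa * f \<le> 3 * lam * s / 2 + tau"
      using mult_right_le_imp_le[OF kff] assms(5) by simp
    then show ?thesis using assms(1) by (simp add: pos_le_divide_eq mult.commute)
  qed (use assms(1-4) in simp)
  then show "f \<le> (1 / kappa) * (3 * lam * s / 2 + tau)" by simp
  have "0 \<le> kappa * f\<^sup>2" using assms(1) by simp
  then have "lam / 2 * b \<le> 3 * lam / 2 * a + tau * f" using basic' by linarith
  then have "b \<le> 3 * a + 2 * tau * f / lam" using assms(2) by (simp add: field_simps)
  then have "off \<le> 4 * a + 2 * tau * f / lam" using off by linarith
  also have "\<dots> \<le> (4 * s + 2 * tau / lam) * f"
    using a by (simp add: algebra_simps)
  also have "\<dots> \<le> (4 * s + 2 * tau / lam) * ((3 * lam * s / 2 + tau) / kappa)"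
    using F assms by (intro mult_left_mono) auto
  also have "\<dots> = (2 / (lam * kappa)) * ((2 * lam * s + tau) * (3 * lam * s / 2 + tau))"
    using assms(1,2) by (simp add: field_simps)
  also have "\<dots> \<le> (2 / (lam * kappa)) * (3 * lam * s + tau)\<^sup>2"
    using assms(1-4) by (intro mult_left_mono) (simp_all add: algebra_simps power2_eq_square)
  finally show "off \<le> (2 / (lam * kappa)) * (3 * lam * s + tau)\<^sup>2" .
qed

definition restricted_strong_convexity :: "real \<Rightarrow> 'p::finite sqmat \<Rightarrow> bool" where
  "restricted_strong_convexity kappa Ts \<longleftrightarrow> (\<forall>D. frob_norm D \<le> 1 \<and> pos_def (Ts + D) \<longrightarrow>
     kappa * (frob_norm D)\<^sup>2 \<le> mat_inner (matrix_inv Ts - matrix_inv (Ts + D)) D)"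

lemma tgl_basic_inequality:
  fixes T Ts :: "'p::finite sqmat" and w ws :: "real^'n::finite"
  assumes opt: "tgl_local_opt h R lam X T w"
    and Ts: "pos_def Ts" "l1_norm Ts \<le> R" and "0 \<le> lam"
    and dev: "linf_norm (wcov h X ws - matrix_inv Ts) \<le> lam / 4"
    and incoh: "\<bar>mat_inner (wcov h X (w - ws)) (T - Ts)\<bar>
                  \<le> t1 * frob_norm (T - Ts) + t2 * l1_norm (T - Ts)"
    and t2: "t2 \<le> lam / 4"
  shows "mat_inner (matrix_inv Ts - matrix_inv T) (T - Ts)
           \<le> lam * (l1_off_norm Ts - l1_off_norm T) + lam / 2 * l1_norm (T - Ts)
             + t1 * frob_norm (T - Ts)"
proof -
  define D where "D = T - Ts"
  have "Ts - T = - D" by (simp add: D_def)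
  moreover have "wcov h X w = wcov h X ws + wcov h X (w - ws)"
    unfolding wcov_add[symmetric] by simp
  ultimately have "- mat_inner (matrix_inv T) D
      \<le> - mat_inner (wcov h X ws) D - mat_inner (wcov h X (w - ws)) D
        + lam * (l1_off_norm Ts - l1_off_norm T)"
    using tgl_first_order_condition[OF opt Ts \<open>0 \<le> lam\<close>]
    by (simp add: mat_inner_minus_left mat_inner_minus_right mat_inner_commute[of D]
        mat_inner_add_left)
  moreover have "\<bar>mat_inner (wcov h X ws - matrix_inv Ts) D\<bar> \<le> lam / 4 * l1_norm D"
    using abs_mat_inner_le[of "wcov h X ws - matrix_inv Ts" D] mult_right_mono[OF dev l1_norm_nonneg[of D]] by linarith
  moreover have "t2 * l1_norm D \<le> lam / 4 * l1_norm D"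
    using mult_right_mono[OF t2 l1_norm_nonneg] .
  ultimately show ?thesis
    using incoh unfolding D_def[symmetric] mat_inner_diff_left by linarith
qed

text \<open>Restricted strong convexity only holds in the unit Frobenius ball; along the ray from
  \<open>Ts\<close> through \<open>T\<close> it propagates linearly beyond it, since the pairing is monotone along
  the ray by antimonotonicity of the inverse.\<close>

lemma restricted_strong_convexity_outside_unit_ball:
  fixes T Ts :: "'p::finite sqmat"
  assumes rsc: "restricted_strong_convexity kappa Ts" and Ts: "pos_def Ts" and T: "pos_def T"
    and f: "1 < frob_norm (T - Ts)"
  shows "kappa * frob_norm (T - Ts) \<le> mat_inner (matrix_inv Ts - matrix_inv T) (T - Ts)"
proof -
  define D where "D = T - Ts"
  define s where "s = 1 / frob_norm D"
  have s: "0 < s" "s < 1" using f by (auto simp: s_def D_def)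
  define A where "A = Ts + s *\<^sub>R D"
  have A: "pos_def A" unfolding A_def D_def using pos_def_segment[OF Ts T] s by simp
  have "frob_norm (s *\<^sub>R D) = 1" using f by (simp add: frob_norm_scaleR s_def D_def)
  then have "kappa \<le> mat_inner (matrix_inv Ts - matrix_inv A) (s *\<^sub>R D)"
    using rsc A unfolding restricted_strong_convexity_def A_def by (metis mult.right_neutral one_power2 order_refl)
  then have "kappa \<le> s * mat_inner (matrix_inv Ts - matrix_inv A) D"
    by (simp add: mat_inner_scaleR_right)
  then have "kappa * frob_norm D \<le> mat_inner (matrix_inv Ts - matrix_inv A) D"
    using f by (simp add: s_def D_def pos_le_divide_eq)
  moreover have "T - A = (1 - s) *\<^sub>R D" by (simp add: A_def D_def algebra_simps)
  then have "0 \<le> mat_inner (matrix_inv A - matrix_inv T) D"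
    using mat_inner_matrix_inv_antimono[OF A T] s
    by (simp add: mat_inner_scaleR_right zero_le_mult_iff)
  ultimately show ?thesis unfolding D_def[symmetric] mat_inner_diff_left by simp
qed

lemma tgl_error_in_unit_ball:
  fixes T Ts :: "'p::finite sqmat"
  assumes rsc: "restricted_strong_convexity kappa Ts" and Ts: "pos_def Ts" "l1_norm Ts \<le> R"
    and T: "pos_def T" "l1_norm T \<le> R"
    and "lam > 0" "R > 0" and lam: "lam \<le> (kappa - t1) / (3 * R)"
    and basic: "mat_inner (matrix_inv Ts - matrix_inv T) (T - Ts)
           \<le> lam * (l1_off_norm Ts - l1_off_norm T) + lam / 2 * l1_norm (T - Ts)
             + t1 * frob_norm (T - Ts)"
  shows "frob_norm (T - Ts) \<le> 1"
proof (rule ccontr)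
  assume "\<not> frob_norm (T - Ts) \<le> 1"
  then have f: "1 < frob_norm (T - Ts)" by simp
  have "l1_off_norm Ts - l1_off_norm T \<le> R"
    using l1_off_norm_le_l1_norm[of Ts] l1_off_norm_nonneg[of T] Ts(2) by linarith
  then have "lam * (l1_off_norm Ts - l1_off_norm T) \<le> lam * R"
    using \<open>lam > 0\<close> by simp
  moreover have "l1_norm (T - Ts) \<le> 2 * R" using l1_norm_diff_le[of T Ts] Ts(2) T(2) by simp
  then have "lam / 2 * l1_norm (T - Ts) \<le> lam * R"
    using \<open>lam > 0\<close> by simp
  ultimately have "kappa * frob_norm (T - Ts) \<le> 2 * lam * R + t1 * frob_norm (T - Ts)"
    using basic restricted_strong_convexity_outside_unit_ball[OF rsc Ts(1) T(1) f] by linarith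
  then have "(kappa - t1) * frob_norm (T - Ts) \<le> 2 * lam * R" by (simp add: algebra_simps)
  moreover have "3 * lam * R \<le> kappa - t1"
    using lam \<open>R > 0\<close> by (simp add: pos_le_divide_eq mult.commute mult.left_commute)
  moreover have "0 < 3 * lam * R" using \<open>lam > 0\<close> \<open>R > 0\<close> by simp
  moreover have "0 < kappa - t1" using calculation(2,3) by linarith
  then have "kappa - t1 < (kappa - t1) * frob_norm (T - Ts)" using f by simp
  ultimately show False by linarith
qed

lemma sparse_error_bounds:
  fixes T Ts :: "'p::finite sqmat"
  assumes sparse: "card {(i, j). i \<noteq> j \<and> Ts$i$j \<noteq> 0} \<le> k"
    and "kappa > 0" "lam > 0" "t1 \<ge> 0"
    and quadratic: "kappa * (frob_norm (T - Ts))\<^sup>2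
           \<le> lam * (l1_off_norm Ts - l1_off_norm T) + lam / 2 * l1_norm (T - Ts)
             + t1 * frob_norm (T - Ts)"
  shows "frob_norm (T - Ts) \<le> (1 / kappa) * (3 * lam * sqrt (real k + real CARD('p)) / 2 + t1)
    \<and> l1_off_norm (T - Ts) \<le> (2 / (lam * kappa)) * (3 * lam * sqrt (real k + real CARD('p)) + t1)\<^sup>2"
proof -
  obtain a b where ab: "0 \<le> a" "0 \<le> b" "l1_norm (T - Ts) = a + b"
    "l1_off_norm Ts - l1_off_norm T \<le> a - b"
    "a \<le> sqrt (real k + real CARD('p)) * frob_norm (T - Ts)"
    using sparse_support_split[OF sparse] by blast
  have "lam * (l1_off_norm Ts - l1_off_norm T) \<le> lam * (a - b)"
    using ab(4) \<open>lam > 0\<close> by simp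
  then have "kappa * (frob_norm (T - Ts))\<^sup>2 \<le> lam * (a - b) + lam / 2 * (a + b) + t1 * frob_norm (T - Ts)"
    using quadratic[unfolded ab(3)] by linarith
  from error_bounds_of_basic_inequality[OF assms(2-4) _ frob_norm_nonneg ab(1,2) this ab(5)]
  show ?thesis using l1_off_norm_le_l1_norm[of "T - Ts"] ab(3) by simp
qed

theorem theorem1:
  fixes X :: "'n::finite \<Rightarrow> real^'p::finite"
    and G B :: "'n set"
    and ThetaS ThetaT :: "real^'p^'p"
    and wT :: "real^'n"
    and k :: nat
    and R lam kappa :: real
    and tau1 tau2 :: "nat \<Rightarrow> nat \<Rightarrow> real"
  assumes p2: "CARD('p) \<ge> 2"
    and partition: "G \<union> B = UNIV" "G \<inter> B = {}"
    and G_ne: "G \<noteq> {}"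
    and ThetaS_pd: "pos_def ThetaS"
    and ThetaS_sparse: "card {(i, j). i \<noteq> j \<and> ThetaS$i$j \<noteq> 0} \<le> k"
    and R_pos: "R > 0" and ThetaS_R: "l1_norm ThetaS \<le> R"
    and lam_pos: "lam > 0"
    and opt: "tgl_local_opt (real (card G)) R lam X ThetaT wT"
    and kappa_pos: "kappa > 0"
    and rsc: "\<forall>D :: real^'p^'p. frob_norm D \<le> 1 \<and> pos_def (ThetaS + D) \<longrightarrow>
               mat_inner (matrix_inv ThetaS - matrix_inv (ThetaS + D)) D \<ge> kappa * (frob_norm D)\<^sup>2"
    and tau_nonneg: "tau1 CARD('n) CARD('p) \<ge> 0" "tau2 CARD('n) CARD('p) \<ge> 0"
    and incoh: "\<bar>mat_inner (wcov (real (card G)) X (wT - (\<chi> i. if i \<in> G then wT$i else 0)))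
                          (ThetaT - ThetaS)\<bar>
               \<le> tau1 CARD('n) CARD('p) * frob_norm (ThetaT - ThetaS)
                 + tau2 CARD('n) CARD('p) * l1_norm (ThetaT - ThetaS)"
    and lam_lower: "4 * max (linf_norm (wcov (real (card G)) X (\<chi> i. if i \<in> G then wT$i else 0)
                                          - matrix_inv ThetaS))
                         (tau2 CARD('n) CARD('p)) \<le> lam"
    and lam_upper: "lam \<le> (kappa - tau1 CARD('n) CARD('p)) / (3 * R)"
  shows "(frob_norm (ThetaT - ThetaS)
           \<le> (1 / kappa) * (3 * lam * sqrt (real k + real CARD('p)) / 2 + tau1 CARD('n) CARD('p)))
         \<and> (l1_off_norm (ThetaT - ThetaS)
           \<le> (2 / (lam * kappa)) * (3 * lam * sqrt (real k + real CARD('p)) + tau1 CARD('n) CARD('p))\<^sup>2)"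
proof -
  define t1 where "t1 = tau1 CARD('n) CARD('p)"
  have T: "pos_def ThetaT" "l1_norm ThetaT \<le> R"
    using opt unfolding tgl_local_opt_def tgl_feasible_def by auto
  have basic: "mat_inner (matrix_inv ThetaS - matrix_inv ThetaT) (ThetaT - ThetaS)
      \<le> lam * (l1_off_norm ThetaS - l1_off_norm ThetaT) + lam / 2 * l1_norm (ThetaT - ThetaS)
        + t1 * frob_norm (ThetaT - ThetaS)"
    using tgl_basic_inequality[OF opt ThetaS_pd ThetaS_R _ _ incoh] lam_pos lam_lower
    unfolding t1_def by simp
  have rsc': "restricted_strong_convexity kappa ThetaS"
    using rsc unfolding restricted_strong_convexity_def by blast
  have "frob_norm (ThetaT - ThetaS) \<le> 1"
    using tgl_error_in_unit_ball[OF rsc' ThetaS_pd ThetaS_R T lam_pos R_pos _ basic] lam_upper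
    unfolding t1_def by blast
  then have "kappa * (frob_norm (ThetaT - ThetaS))\<^sup>2
      \<le> mat_inner (matrix_inv ThetaS - matrix_inv ThetaT) (ThetaT - ThetaS)"
    using rsc' T(1) unfolding restricted_strong_convexity_def
    by (auto dest: spec[of _ "ThetaT - ThetaS"])
  with basic show ?thesis
    using sparse_error_bounds[OF ThetaS_sparse kappa_pos lam_pos tau_nonneg(1)]
    unfolding t1_def by (meson order_trans)
qed

end
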